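(* Consider the optimization problem \[ \max_{\mathsf{V}_1,\dots,\mathsf{V}_K}\ \sum_{k=1}^K \log_2(1+\gamma_k)\quad\text{s.t.}\quad \sum_{k=1}^K\int_{\mathcal{A}}|\mathsf{V}_k(\mathbf{r})|^2\,d\mathbf{r}=P_{\max}, \] where \[ \gamma_k=\frac{|\mathcal{A}_k|\cdot\left|\int_{\mathcal{A}}\mathsf{H}_k(\mathbf{r})\mathsf{V}_k(\mathbf{r})\,d\mathbf{r}\right|^2}{\sum_{j=1,j\neq k}^K|\mathcal{A}_j|\cdot\left|\int_{\mathcal{A}}\mathsf{H}_k(\mathbf{r})\mathsf{V}_j(\mathbf{r})\,d\mathbf{r}\right|^2+\sigma_k^2}. \] Then the optimal beamforming lies in the function subspace spanned by $\mathsf{H}_1^*(\mathbf{r}),\dots,\mathsf{H}_K^*(\mathbf{r})$: for each $k$, the optimal $\mathsf{V}_k$ can be written as $\mathsf{V}_k(\mathbf{r})=\sum_{j=1}^K b_{jk}\mathsf{H}_j^*(\mathbf{r})$ for some complex scalars $b_{jk}$.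
   Context: A base station with a continuous aperture array occupying a region $\mathcal{A}\subseteq\mathbb{R}^3$ serves $K$ users. User $k$ has aperture of area $|\mathcal{A}_k|>0$ centered at $\mathbf{s}_k\in\mathbb{R}^3$, and noise variance $\sigma_k^2>0$; $P_{\max}>0$ is the transmit power budget. The beamforming $\mathsf{V}_k:\mathcal{A}\to\mathbb{C}$ for user $k$ is a square-integrable function. The channel response of user $k$ is \[ \mathsf{H}_k(\mathbf{r})=\sqrt{\frac{\mathbf{e}_r^T(\mathbf{s}_k-\mathbf{r})}{\|\mathbf{r}-\mathbf{s}_k\|}}\cdot\frac{j k_0\eta e^{-jk_0\|\mathbf{r}-\mathbf{s}_k\|}}{4\pi\|\mathbf{r}-\mathbf{s}_k\|}\left(1+\frac{j/k_0}{\|\mathbf{r}-\mathbf{s}_k\|}-\frac{1/k_0^2}{\|\mathbf{r}-\mathbf{s}_k\|^2}\right), \] where $\mathbf{e}_r\in\mathbb{R}^3$ is the normal vector of the base-station aperture, $\eta=120\pi$, $k_0=2\pi/\lambda$ with $\lambda$ the wavelength, and $j$ is the imaginary unit. $(\cdot)^*$ denotes complex conjugation. *)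

theory Defs
  imports "HOL-Analysis.Analysis"
begin

text \<open>Channel response H_k(r) of a user with aperture centre s, for a base-station
  aperture with normal vector er and wavelength lam (k0 = 2 pi / lam, eta = 120 pi).\<close>
definition chan :: "real^3 \<Rightarrow> real \<Rightarrow> real^3 \<Rightarrow> real^3 \<Rightarrow> complex" where
  "chan er lam s r =
     (let k0 = 2 * pi / lam; d = norm (r - s); eta = 120 * pi in
       csqrt (complex_of_real (er \<bullet> (s - r) / d))
       * (\<i> * complex_of_real (k0 * eta) * exp (- \<i> * complex_of_real (k0 * d))
          / complex_of_real (4 * pi * d))
       * (1 + (\<i> / complex_of_real k0) / complex_of_real d
            - complex_of_real (1 / k0\<^sup>2) / complex_of_real (d\<^sup>2)))"

definition sq_integrable_on :: "(real^3) set \<Rightarrow> (real^3 \<Rightarrow> complex) \<Rightarrow> bool" where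
  "sq_integrable_on A f \<longleftrightarrow>
     set_borel_measurable lborel A f \<and> set_integrable lborel A (\<lambda>r. (cmod (f r))\<^sup>2)"

definition feasible :: "(real^3) set \<Rightarrow> nat \<Rightarrow> real \<Rightarrow> (nat \<Rightarrow> real^3 \<Rightarrow> complex) \<Rightarrow> bool" where
  "feasible A K P V \<longleftrightarrow>
     (\<forall>k<K. sq_integrable_on A (V k)) \<and>
     (\<Sum>k<K. (LINT r:A|lborel. (cmod (V k r))\<^sup>2)) = P"

text \<open>SINR of user k; H k is the channel of user k, area k = |A_k|, sig2 k = sigma_k^2.\<close>
definition sinr :: "(real^3) set \<Rightarrow> nat \<Rightarrow> (nat \<Rightarrow> real^3 \<Rightarrow> complex) \<Rightarrow> (nat \<Rightarrow> real)
                    \<Rightarrow> (nat \<Rightarrow> real) \<Rightarrow> (nat \<Rightarrow> real^3 \<Rightarrow> complex) \<Rightarrow> nat \<Rightarrow> real" where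
  "sinr A K H area sig2 V k =
     area k * (cmod (LINT r:A|lborel. H k r * V k r))\<^sup>2 /
     ((\<Sum>j\<in>{..<K} - {k}. area j * (cmod (LINT r:A|lborel. H k r * V j r))\<^sup>2) + sig2 k)"

definition sum_rate :: "(real^3) set \<Rightarrow> nat \<Rightarrow> (nat \<Rightarrow> real^3 \<Rightarrow> complex) \<Rightarrow> (nat \<Rightarrow> real)
                    \<Rightarrow> (nat \<Rightarrow> real) \<Rightarrow> (nat \<Rightarrow> real^3 \<Rightarrow> complex) \<Rightarrow> real" where
  "sum_rate A K H area sig2 V = (\<Sum>k<K. log 2 (1 + sinr A K H area sig2 V k))"

end

theory Submission
  imports Defs
begin

(* Split each beamformer V_k into its orthogonal projection U_k onto the span of the conjugate
   channels cnj H_1, ..., cnj H_K and a residual R_k.  The received amplitudes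
   \<integral> H_i V_k = <V_k, cnj H_i> only see U_k, so U has the same sum rate as V, while
   ||V_k||^2 = ||U_k||^2 + ||R_k||^2.  If some residual were nonzero, U would use less than the
   full power P; scaling U by c > 1 up to power P multiplies every received power by c^2 and
   leaves the noise fixed, so every SINR with a nonzero signal grows and the sum rate strictly
   increases whenever it is positive.  At an optimum it is positive, because a matched beam
   c * cnj H_k for a single user already has positive rate (the channel vanishes only on a
   hyperplane, a null set).  Hence all residuals vanish almost everywhere on A. *)

section \<open>The L2 inner product\<close>

definition square_integrable :: "'a measure \<Rightarrow> ('a \<Rightarrow> complex) \<Rightarrow> bool" where
  "square_integrable M f \<longleftrightarrow> f \<in> borel_measurable M \<and> integrable M (\<lambda>x. (cmod (f x))\<^sup>2)"

definition L2_inner :: "'a measure \<Rightarrow> ('a \<Rightarrow> complex) \<Rightarrow> ('a \<Rightarrow> complex) \<Rightarrow> complex" where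
  "L2_inner M f g = (CLINT x|M. f x * cnj (g x))"

definition L2_sqnorm :: "'a measure \<Rightarrow> ('a \<Rightarrow> complex) \<Rightarrow> real" where
  "L2_sqnorm M f = (LINT x|M. (cmod (f x))\<^sup>2)"

lemma borel_measurable_cnj [measurable]:
  "f \<in> borel_measurable M \<Longrightarrow> (\<lambda>x. cnj (f x)) \<in> borel_measurable M"
  by (rule borel_measurable_continuous_on[where f = cnj]) (auto intro: continuous_on_cnj continuous_on_id)

lemma norm_mult_cnj_le: "cmod (a * cnj b) \<le> ((cmod a)\<^sup>2 + (cmod b)\<^sup>2) / 2"
proof -
  have "0 \<le> (cmod a - cmod b)\<^sup>2" by simp
  then show ?thesis by (simp add: norm_mult power2_eq_square algebra_simps)
qed

lemma integrable_mult_cnj: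
  assumes "square_integrable M f" "square_integrable M g"
  shows "integrable M (\<lambda>x. f x * cnj (g x))"
proof (rule Bochner_Integration.integrable_bound)
  show "integrable M (\<lambda>x. ((cmod (f x))\<^sup>2 + (cmod (g x))\<^sup>2) / 2)"
    using assms unfolding square_integrable_def by auto
  have [measurable]: "f \<in> borel_measurable M" "g \<in> borel_measurable M"
    using assms unfolding square_integrable_def by auto
  show "(\<lambda>x. f x * cnj (g x)) \<in> borel_measurable M" by measurable
  show "AE x in M. norm (f x * cnj (g x)) \<le> norm (((cmod (f x))\<^sup>2 + (cmod (g x))\<^sup>2) / 2)"
    using norm_mult_cnj_le by (auto intro!: AE_I2)
qed

lemma square_integrable_add:
  assumes "square_integrable M f" "square_integrable M g"
  shows "square_integrable M (\<lambda>x. f x + g x)"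
  unfolding square_integrable_def
proof
  have [measurable]: "f \<in> borel_measurable M" "g \<in> borel_measurable M"
    using assms unfolding square_integrable_def by auto
  show "(\<lambda>x. f x + g x) \<in> borel_measurable M" by measurable
  have bound: "(cmod (f x + g x))\<^sup>2 \<le> 2 * (cmod (f x))\<^sup>2 + 2 * (cmod (g x))\<^sup>2" for x
  proof -
    have "(cmod (f x + g x))\<^sup>2 \<le> (cmod (f x) + cmod (g x))\<^sup>2"
      by (simp add: norm_triangle_ineq power_mono)
    also have "\<dots> \<le> 2 * (cmod (f x))\<^sup>2 + 2 * (cmod (g x))\<^sup>2"
      using norm_mult_cnj_le[of "f x" "g x"] by (simp add: power2_eq_square algebra_simps norm_mult)
    finally show ?thesis .
  qed
  show "integrable M (\<lambda>x. (cmod (f x + g x))\<^sup>2)"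
    by (rule Bochner_Integration.integrable_bound[where f = "\<lambda>x. 2 * (cmod (f x))\<^sup>2 + 2 * (cmod (g x))\<^sup>2"])
       (use assms bound in \<open>auto simp: square_integrable_def\<close>)
qed

lemma square_integrable_cmult: "square_integrable M f \<Longrightarrow> square_integrable M (\<lambda>x. c * f x)"
  unfolding square_integrable_def by (auto simp: norm_mult power_mult_distrib)

lemma square_integrable_diff:
  assumes "square_integrable M f" "square_integrable M g"
  shows "square_integrable M (\<lambda>x. f x - g x)"
  using square_integrable_add[OF assms(1) square_integrable_cmult[OF assms(2), of "-1"]] by simp

lemma square_integrable_sum:
  "(\<And>j. j \<in> S \<Longrightarrow> square_integrable M (f j)) \<Longrightarrow> square_integrable M (\<lambda>x. \<Sum>j\<in>S. f j x)"
proof (induction S rule: infinite_finite_induct)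
  case (insert a F)
  then show ?case using square_integrable_add[of M "f a" "\<lambda>x. \<Sum>j\<in>F. f j x"] by simp
qed (auto simp: square_integrable_def)

lemma square_integrable_cnj: "square_integrable M f \<Longrightarrow> square_integrable M (\<lambda>x. cnj (f x))"
  unfolding square_integrable_def by auto

lemma square_integrable_bounded:
  assumes "finite_measure M" "f \<in> borel_measurable M" "\<forall>x\<in>space M. cmod (f x) \<le> B"
  shows "square_integrable M f"
proof -
  interpret finite_measure M by fact
  have "integrable M (\<lambda>x. (cmod (f x))\<^sup>2)"
    by (rule integrable_const_bound[where B = "B\<^sup>2"])
       (use assms in \<open>auto intro!: AE_I2 power_mono\<close>)
  with assms show ?thesis unfolding square_integrable_def by simp
qed

lemma L2_inner_commute: "L2_inner M g f = cnj (L2_inner M f g)"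
  unfolding L2_inner_def
  by (subst Bochner_Integration.integral_cnj[symmetric]) (simp add: mult.commute)

lemma L2_inner_add_left:
  assumes "square_integrable M f" "square_integrable M g" "square_integrable M h"
  shows "L2_inner M (\<lambda>x. f x + g x) h = L2_inner M f h + L2_inner M g h"
  unfolding L2_inner_def
  using integrable_mult_cnj[OF assms(1,3)] integrable_mult_cnj[OF assms(2,3)]
  by (simp add: distrib_right)

lemma L2_inner_add_right:
  assumes "square_integrable M f" "square_integrable M g" "square_integrable M h"
  shows "L2_inner M h (\<lambda>x. f x + g x) = L2_inner M h f + L2_inner M h g"
  by (subst (1 2 3) L2_inner_commute) (simp add: L2_inner_add_left[OF assms])

lemma L2_inner_cmult_left: "L2_inner M (\<lambda>x. c * f x) h = c * L2_inner M f h"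
  unfolding L2_inner_def by (simp add: mult.assoc)

lemma L2_inner_cmult_right: "L2_inner M h (\<lambda>x. c * f x) = cnj c * L2_inner M h f"
  by (subst (1 2) L2_inner_commute) (simp add: L2_inner_cmult_left)

lemma L2_inner_diff_left:
  assumes "square_integrable M f" "square_integrable M g" "square_integrable M h"
  shows "L2_inner M (\<lambda>x. f x - g x) h = L2_inner M f h - L2_inner M g h"
  using L2_inner_add_left[OF assms(1) square_integrable_cmult[OF assms(2), of "-1"] assms(3)]
    L2_inner_cmult_left[of M "-1" g h]
  by simp

lemma L2_inner_sum_right:
  assumes "\<And>j. j \<in> S \<Longrightarrow> square_integrable M (f j)" "square_integrable M h"
  shows "L2_inner M h (\<lambda>x. \<Sum>j\<in>S. f j x) = (\<Sum>j\<in>S. L2_inner M h (f j))"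
  using assms(1)
proof (induction S rule: infinite_finite_induct)
  case (insert a F)
  then have "L2_inner M h (\<lambda>x. \<Sum>j\<in>insert a F. f j x)
      = L2_inner M h (f a) + L2_inner M h (\<lambda>x. \<Sum>j\<in>F. f j x)"
    by (simp add: L2_inner_add_right square_integrable_sum assms(2))
  with insert show ?case by simp
qed (simp_all add: L2_inner_def)

lemma L2_inner_self: "L2_inner M f f = complex_of_real (L2_sqnorm M f)"
proof -
  have "(\<lambda>x. f x * cnj (f x)) = (\<lambda>x. complex_of_real ((cmod (f x))\<^sup>2))"
    by (metis complex_norm_square)
  then show ?thesis
    unfolding L2_inner_def L2_sqnorm_def
    using integral_complex_of_real[of M "\<lambda>x. (cmod (f x))\<^sup>2"] by simp
qed

lemma L2_sqnorm_nonneg: "L2_sqnorm M f \<ge> 0"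
  unfolding L2_sqnorm_def by simp

lemma L2_sqnorm_cmult: "L2_sqnorm M (\<lambda>x. c * f x) = (cmod c)\<^sup>2 * L2_sqnorm M f"
  unfolding L2_sqnorm_def by (simp add: norm_mult power_mult_distrib)

lemma L2_sqnorm_eq_0_iff:
  assumes "square_integrable M f"
  shows "L2_sqnorm M f = 0 \<longleftrightarrow> (AE x in M. f x = 0)"
proof -
  have "L2_sqnorm M f = 0 \<longleftrightarrow> (AE x in M. (cmod (f x))\<^sup>2 = 0)"
    using assms integral_nonneg_eq_0_iff_AE[of M "\<lambda>x. (cmod (f x))\<^sup>2"]
    unfolding square_integrable_def L2_sqnorm_def by auto
  then show ?thesis by simp
qed

lemma L2_inner_eq_0_if_sqnorm_eq_0:
  assumes "square_integrable M f" "L2_sqnorm M f = 0"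
  shows "L2_inner M f g = 0"
proof -
  have "AE x in M. f x * cnj (g x) = 0"
    using assms by (auto simp: L2_sqnorm_eq_0_iff elim!: eventually_mono)
  then show ?thesis unfolding L2_inner_def by (rule integral_eq_zero_AE)
qed

lemma L2_inner_sum_eq_0:
  assumes "\<forall>i<n. square_integrable M (h i)" "square_integrable M f" "\<forall>i<n. L2_inner M f (h i) = 0"
  shows "L2_inner M f (\<lambda>x. \<Sum>j<n. c j * h j x) = 0"
proof -
  have "L2_inner M f (\<lambda>x. \<Sum>j<n. c j * h j x) = (\<Sum>j<n. L2_inner M f (\<lambda>x. c j * h j x))"
    by (rule L2_inner_sum_right) (use assms in \<open>auto intro: square_integrable_cmult\<close>)
  with assms(3) show ?thesis by (simp add: L2_inner_cmult_right)
qed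

lemma L2_sqnorm_add_orthogonal:
  assumes "square_integrable M f" "square_integrable M g" "L2_inner M f g = 0"
  shows "L2_sqnorm M (\<lambda>x. f x + g x) = L2_sqnorm M f + L2_sqnorm M g"
proof -
  have fg: "square_integrable M (\<lambda>x. f x + g x)"
    using assms(1,2) by (rule square_integrable_add)
  have "L2_inner M g f = 0"
    using assms(3) by (subst L2_inner_commute) simp
  then have "L2_inner M (\<lambda>x. f x + g x) (\<lambda>x. f x + g x) = L2_inner M f f + L2_inner M g g"
    using assms by (simp add: L2_inner_add_left[OF assms(1,2) fg] L2_inner_add_right)
  then show ?thesis
    by (simp add: L2_inner_self flip: of_real_add)
qed

lemma exists_orthogonal_projection:
  fixes n :: nat
  assumes "\<forall>i<n. square_integrable M (h i)" "square_integrable M v"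
  shows "\<exists>b. \<forall>i<n. L2_inner M (\<lambda>x. v x - (\<Sum>j<n. b j * h j x)) (h i) = 0"
  using assms
proof (induction n arbitrary: v)
  case (Suc n)
  have h: "\<forall>i<n. square_integrable M (h i)" and hn: "square_integrable M (h n)"
    using Suc.prems(1) by auto
  have comb: "square_integrable M (\<lambda>x. \<Sum>j<n. a j * h j x)" for a
    using h by (intro square_integrable_sum square_integrable_cmult) auto
  obtain c where c: "\<forall>i<n. L2_inner M (\<lambda>x. h n x - (\<Sum>j<n. c j * h j x)) (h i) = 0"
    using Suc.IH[OF h hn] by blast
  obtain d where d: "\<forall>i<n. L2_inner M (\<lambda>x. v x - (\<Sum>j<n. d j * h j x)) (h i) = 0"
    using Suc.IH[OF h Suc.prems(2)] by blast
  \<comment> \<open>Gram-Schmidt step: \<open>u\<close> is \<open>h n\<close> made orthogonal to the earlier \<open>h i\<close>; removing from \<open>w\<close>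
    its component along \<open>u\<close> keeps \<open>w\<close> orthogonal to them and makes it orthogonal to \<open>h n\<close>.\<close>
  define u where "u x = h n x - (\<Sum>j<n. c j * h j x)" for x
  define w where "w x = v x - (\<Sum>j<n. d j * h j x)" for x
  define t where "t = L2_inner M w u / L2_inner M u u"
  define r where "r x = w x - t * u x" for x
  have u: "square_integrable M u"
    unfolding u_def using hn comb by (rule square_integrable_diff)
  have w: "square_integrable M w"
    unfolding w_def using Suc.prems(2) comb by (rule square_integrable_diff)
  have r: "square_integrable M r"
    unfolding r_def using w square_integrable_cmult[OF u] by (rule square_integrable_diff)
  have r_h: "\<forall>i<n. L2_inner M r (h i) = 0"
    using c d h unfolding r_def u_def w_def
    by (simp add: L2_inner_diff_left[OF w[unfolded w_def] square_integrable_cmult[OF u[unfolded u_def]]]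
        L2_inner_cmult_left)
  \<comment> \<open>If \<open>u\<close> is null then \<open>t = 0\<close> by the convention \<open>x / 0 = 0\<close>, and \<open>w\<close> is already
    orthogonal to \<open>u\<close>.\<close>
  have "L2_inner M w u = t * L2_inner M u u"
  proof (cases "L2_inner M u u = 0")
    case True
    then have "L2_inner M u w = 0"
      using L2_inner_eq_0_if_sqnorm_eq_0[OF u] by (simp add: L2_inner_self)
    with True show ?thesis by (subst L2_inner_commute) simp
  qed (simp add: t_def)
  then have r_u: "L2_inner M r u = 0"
    unfolding r_def by (simp add: L2_inner_diff_left[OF w square_integrable_cmult[OF u] u] L2_inner_cmult_left)
  have "h n = (\<lambda>x. u x + (\<Sum>j<n. c j * h j x))"
    unfolding u_def by simp
  then have r_hn: "L2_inner M r (h n) = 0"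
    using r_u L2_inner_sum_eq_0[OF h r r_h]
    by (simp add: L2_inner_add_right[OF u comb r])
  define b where "b j = (if j = n then t else d j - t * c j)" for j
  have "(\<lambda>x. v x - (\<Sum>j<Suc n. b j * h j x)) = r"
    by (auto simp: r_def w_def u_def b_def algebra_simps sum.distrib sum_subtractf sum_distrib_left
        intro!: sum.cong)
  with r_h r_hn show ?case
    by (intro exI[of _ b]) (auto simp: less_Suc_eq)
qed simp

lemma L2_inner_orthogonal_projection:
  fixes n :: nat
  assumes h: "\<forall>i<n. square_integrable M (h i)" and v: "square_integrable M v"
    and orth: "\<forall>i<n. L2_inner M (\<lambda>x. v x - (\<Sum>j<n. b j * h j x)) (h i) = 0" and "i < n"
  shows "L2_inner M (\<lambda>x. \<Sum>j<n. b j * h j x) (h i) = L2_inner M v (h i)"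
proof -
  have "square_integrable M (\<lambda>x. \<Sum>j<n. b j * h j x)"
    using h by (intro square_integrable_sum square_integrable_cmult) auto
  with assms show ?thesis
    using L2_inner_diff_left[OF v] by simp
qed

lemma L2_sqnorm_orthogonal_projection:
  fixes n :: nat
  assumes h: "\<forall>i<n. square_integrable M (h i)" and v: "square_integrable M v"
    and orth: "\<forall>i<n. L2_inner M (\<lambda>x. v x - (\<Sum>j<n. b j * h j x)) (h i) = 0"
  shows "L2_sqnorm M v
    = L2_sqnorm M (\<lambda>x. \<Sum>j<n. b j * h j x) + L2_sqnorm M (\<lambda>x. v x - (\<Sum>j<n. b j * h j x))"
proof -
  have p: "square_integrable M (\<lambda>x. \<Sum>j<n. b j * h j x)"
    using h by (intro square_integrable_sum square_integrable_cmult) auto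
  have r: "square_integrable M (\<lambda>x. v x - (\<Sum>j<n. b j * h j x))"
    using v p by (rule square_integrable_diff)
  have "L2_inner M (\<lambda>x. v x - (\<Sum>j<n. b j * h j x)) (\<lambda>x. \<Sum>j<n. b j * h j x) = 0"
    using h r orth by (rule L2_inner_sum_eq_0)
  then have "L2_inner M (\<lambda>x. \<Sum>j<n. b j * h j x) (\<lambda>x. v x - (\<Sum>j<n. b j * h j x)) = 0"
    by (subst L2_inner_commute) simp
  from L2_sqnorm_add_orthogonal[OF p r this] show ?thesis
    by simp
qed

lemma exists_orthogonal_projection_family:
  fixes n K :: nat
  assumes h: "\<forall>i<n. square_integrable M (h i)" and v: "\<forall>k<K. square_integrable M (v k)"
  obtains B where
    "\<And>k i. k < K \<Longrightarrow> i < n \<Longrightarrow> L2_inner M (\<lambda>x. \<Sum>j<n. B k j * h j x) (h i) = L2_inner M (v k) (h i)"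
    "\<And>k. k < K \<Longrightarrow> L2_sqnorm M (v k)
      = L2_sqnorm M (\<lambda>x. \<Sum>j<n. B k j * h j x) + L2_sqnorm M (\<lambda>x. v k x - (\<Sum>j<n. B k j * h j x))"
proof -
  have "\<exists>b. \<forall>i<n. L2_inner M (\<lambda>x. v k x - (\<Sum>j<n. b j * h j x)) (h i) = 0" if "k < K" for k
    using exists_orthogonal_projection[OF h] v that by blast
  then obtain B where B: "\<And>k. k < K \<Longrightarrow> \<forall>i<n. L2_inner M (\<lambda>x. v k x - (\<Sum>j<n. B k j * h j x)) (h i) = 0"
    by metis
  show thesis
  proof (rule that)
    show "L2_inner M (\<lambda>x. \<Sum>j<n. B k j * h j x) (h i) = L2_inner M (v k) (h i)"
      if "k < K" "i < n" for k i
      using L2_inner_orthogonal_projection[OF h v[rule_format, OF that(1)] B[OF that(1)] that(2)] .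
    show "L2_sqnorm M (v k)
      = L2_sqnorm M (\<lambda>x. \<Sum>j<n. B k j * h j x) + L2_sqnorm M (\<lambda>x. v k x - (\<Sum>j<n. B k j * h j x))"
      if "k < K" for k
      using L2_sqnorm_orthogonal_projection[OF h v[rule_format, OF that] B[OF that]] .
  qed
qed

section \<open>SINR and sum rate\<close>

lemma ratio_le_scaled_ratio:
  fixes X Y \<sigma> c :: real
  assumes "0 \<le> X" "0 \<le> Y" "0 < \<sigma>" "1 \<le> c"
  shows "X / (Y + \<sigma>) \<le> c * X / (c * Y + \<sigma>)"
    and "0 < X \<Longrightarrow> 1 < c \<Longrightarrow> X / (Y + \<sigma>) < c * X / (c * Y + \<sigma>)"
proof -
  have pos: "0 < Y + \<sigma>" "0 < c * Y + \<sigma>"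
    using assms by (auto intro: add_nonneg_pos)
  have "X * \<sigma> \<le> c * (X * \<sigma>)"
    using mult_right_mono[OF assms(4), of "X * \<sigma>"] assms by simp
  then show "X / (Y + \<sigma>) \<le> c * X / (c * Y + \<sigma>)"
    using pos by (simp add: divide_simps algebra_simps)
  assume "0 < X" "1 < c"
  then have "X * \<sigma> < c * (X * \<sigma>)"
    using assms by simp
  then show "X / (Y + \<sigma>) < c * X / (c * Y + \<sigma>)"
    using pos by (simp add: divide_simps algebra_simps)
qed

lemma sinr_denominator_pos:
  assumes "\<forall>j<K. area j > 0" "sig2 k > 0"
  shows "0 < (\<Sum>j\<in>{..<K} - {k}. area j * (cmod (LINT r:A|lborel. H k r * W j r))\<^sup>2) + sig2 k"
proof -
  have "0 \<le> (\<Sum>j\<in>{..<K} - {k}. area j * (cmod (LINT r:A|lborel. H k r * W j r))\<^sup>2)"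
    using assms(1) by (intro sum_nonneg) (simp add: less_imp_le)
  with assms(2) show ?thesis by linarith
qed

lemma sinr_nonneg:
  assumes "\<forall>j<K. area j > 0" "\<forall>j<K. sig2 j > 0" "k < K"
  shows "0 \<le> sinr A K H area sig2 W k"
  unfolding sinr_def using assms sinr_denominator_pos[of K area sig2 k A H W]
  by (simp add: less_imp_le)

lemma sinr_pos_iff:
  assumes "\<forall>j<K. area j > 0" "\<forall>j<K. sig2 j > 0" "k < K"
  shows "0 < sinr A K H area sig2 W k \<longleftrightarrow> (LINT r:A|lborel. H k r * W k r) \<noteq> 0"
  unfolding sinr_def using assms sinr_denominator_pos[of K area sig2 k A H W]
  by (simp add: zero_less_divide_iff zero_less_mult_iff)

lemma sum_rate_pos_iff:
  assumes "\<forall>j<K. area j > 0" "\<forall>j<K. sig2 j > 0"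
  shows "0 < sum_rate A K H area sig2 W \<longleftrightarrow> (\<exists>k<K. (LINT r:A|lborel. H k r * W k r) \<noteq> 0)"
proof -
  let ?rate = "\<lambda>k. log 2 (1 + sinr A K H area sig2 W k)"
  have nonneg: "0 \<le> ?rate k" if "k < K" for k
    using sinr_nonneg[OF assms that, of A H W] by simp
  have rate_pos_iff: "0 < ?rate k \<longleftrightarrow> (LINT r:A|lborel. H k r * W k r) \<noteq> 0" if "k < K" for k
    using sinr_nonneg[OF assms that, of A H W] sinr_pos_iff[OF assms that, of A H W] by simp
  have "0 < sum ?rate {..<K} \<longleftrightarrow> (\<exists>k<K. 0 < ?rate k)"
  proof
    assume "0 < sum ?rate {..<K}"
    then show "\<exists>k<K. 0 < ?rate k"
      using sum_nonpos[of "{..<K}" ?rate] by (force simp: not_less)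
  next
    assume "\<exists>k<K. 0 < ?rate k"
    then obtain k where "k < K" "0 < ?rate k" by blast
    then show "0 < sum ?rate {..<K}"
      by (intro sum_pos2[of _ k]) (auto intro: nonneg)
  qed
  then show ?thesis
    unfolding sum_rate_def using rate_pos_iff by auto
qed

lemma sinr_scaled:
  "sinr A K H area sig2 (\<lambda>j r. complex_of_real c * W j r) k
   = c\<^sup>2 * (area k * (cmod (LINT r:A|lborel. H k r * W k r))\<^sup>2)
     / (c\<^sup>2 * (\<Sum>j\<in>{..<K} - {k}. area j * (cmod (LINT r:A|lborel. H k r * W j r))\<^sup>2) + sig2 k)"
proof -
  have "(LINT r:A|lborel. H k r * (complex_of_real c * W j r))
      = complex_of_real c * (LINT r:A|lborel. H k r * W j r)" for j
    by (simp add: mult.left_commute)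
  then show ?thesis
    unfolding sinr_def by (simp add: norm_mult power_mult_distrib sum_distrib_left algebra_simps)
qed

lemma sum_rate_less_scaled:
  assumes area: "\<forall>j<K. area j > 0" and sig2: "\<forall>j<K. sig2 j > 0"
    and "1 < c" and "0 < sum_rate A K H area sig2 W"
  shows "sum_rate A K H area sig2 W < sum_rate A K H area sig2 (\<lambda>j r. complex_of_real c * W j r)"
proof -
  let ?W' = "\<lambda>j r. complex_of_real c * W j r"
  have c2: "1 < c\<^sup>2"
    using assms(3) by (simp add: one_less_power)
  have Y: "0 \<le> (\<Sum>j\<in>{..<K} - {k}. area j * (cmod (LINT r:A|lborel. H k r * W j r))\<^sup>2)" for k
    using area by (intro sum_nonneg) (simp add: less_imp_le)
  have le: "log 2 (1 + sinr A K H area sig2 W k) \<le> log 2 (1 + sinr A K H area sig2 ?W' k)"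
    if "k < K" for k
  proof -
    have "sinr A K H area sig2 W k \<le> sinr A K H area sig2 ?W' k"
      unfolding sinr_scaled unfolding sinr_def
      using that area sig2 c2 Y by (intro ratio_le_scaled_ratio(1)) auto
    with sinr_nonneg[OF area sig2 that, of A H W] show ?thesis by simp
  qed
  obtain k0 where k0: "k0 < K" "(LINT r:A|lborel. H k0 r * W k0 r) \<noteq> 0"
    using assms(4) sum_rate_pos_iff[OF area sig2] by blast
  have less: "sinr A K H area sig2 W k0 < sinr A K H area sig2 ?W' k0"
    unfolding sinr_scaled unfolding sinr_def
    using k0 area sig2 c2 Y by (intro ratio_le_scaled_ratio(2)) auto
  show ?thesis
    unfolding sum_rate_def
  proof (rule sum_strict_mono_ex1)
    show "\<forall>k\<in>{..<K}. log 2 (1 + sinr A K H area sig2 W k) \<le> log 2 (1 + sinr A K H area sig2 ?W' k)"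
      using le by blast
    show "\<exists>k\<in>{..<K}. log 2 (1 + sinr A K H area sig2 W k) < log 2 (1 + sinr A K H area sig2 ?W' k)"
      using k0 less sinr_nonneg[OF area sig2 k0(1), of A H W] by (intro bexI[of _ k0]) auto
  qed simp
qed

lemma sum_rate_cong_gains:
  assumes "\<forall>j<K. \<forall>k<K. (LINT r:A|lborel. H k r * W j r) = (LINT r:A|lborel. H k r * V j r)"
  shows "sum_rate A K H area sig2 W = sum_rate A K H area sig2 V"
  unfolding sum_rate_def sinr_def using assms by (auto intro!: sum.cong)

section \<open>Beamformers as elements of L2 of the aperture\<close>

lemma sq_integrable_on_iff_square_integrable:
  assumes "A \<in> sets lborel"
  shows "sq_integrable_on A f \<longleftrightarrow> square_integrable (restrict_space lborel A) f"
  using assms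
  unfolding sq_integrable_on_def square_integrable_def set_borel_measurable_def
  by (simp add: borel_measurable_restrict_space_iff set_integrable_eq)

lemma set_integral_eq_restrict_space:
  fixes f :: "'a::euclidean_space \<Rightarrow> 'b::{banach, second_countable_topology}"
  assumes "A \<in> sets lborel"
  shows "(LINT r:A|lborel. f r) = integral\<^sup>L (restrict_space lborel A) f"
  unfolding set_lebesgue_integral_def using assms
  by (simp add: integral_restrict_space)

lemma AE_restrict_space_lborel_iff:
  assumes "A \<in> sets lborel"
  shows "(AE r in restrict_space lborel A. Q r) \<longleftrightarrow> (AE r in lborel. r \<in> A \<longrightarrow> Q r)"
  using assms by (simp add: AE_restrict_space_iff)

lemma set_integral_mult_eq_L2_inner:
  assumes "A \<in> sets lborel"
  shows "(LINT r:A|lborel. H r * W r) = L2_inner (restrict_space lborel A) W (\<lambda>r. cnj (H r))"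
  unfolding L2_inner_def set_integral_eq_restrict_space[OF assms] by (simp add: mult.commute)

lemma feasible_iff_L2:
  assumes "A \<in> sets lborel"
  shows "feasible A K P W \<longleftrightarrow>
    (\<forall>k<K. square_integrable (restrict_space lborel A) (W k)) \<and>
    (\<Sum>k<K. L2_sqnorm (restrict_space lborel A) (W k)) = P"
  unfolding feasible_def L2_sqnorm_def
  by (simp add: sq_integrable_on_iff_square_integrable[OF assms] set_integral_eq_restrict_space[OF assms])

lemma exists_feasible_sum_rate_pos:
  fixes A :: "(real^3) set"
  assumes A: "A \<in> sets lborel" and k0: "k0 < K" and H: "sq_integrable_on A (H k0)"
    and H_nonzero: "\<not> (AE r in lborel. r \<in> A \<longrightarrow> H k0 r = 0)"
    and area: "\<forall>j<K. area j > 0" and sig2: "\<forall>j<K. sig2 j > 0" and P: "0 < P"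
  shows "\<exists>W. feasible A K P W \<and> 0 < sum_rate A K H area sig2 W"
proof -
  define N where "N = restrict_space lborel A"
  define h where "h r = cnj (H k0 r)" for r
  have h: "square_integrable N h"
    using H unfolding N_def h_def sq_integrable_on_iff_square_integrable[OF A]
    by (rule square_integrable_cnj)
  have "L2_sqnorm N h \<noteq> 0"
    using H_nonzero L2_sqnorm_eq_0_iff[OF h]
    unfolding N_def h_def AE_restrict_space_lborel_iff[OF A] by simp
  then have q: "0 < L2_sqnorm N h"
    using L2_sqnorm_nonneg[of N h] by linarith
  define \<alpha> where "\<alpha> = complex_of_real (sqrt (P / L2_sqnorm N h))"
  define W where "W k r = (if k = k0 then \<alpha> else 0) * h r" for k r
  have "L2_sqnorm N (W k) = (if k = k0 then P else 0)" for k
    unfolding W_def L2_sqnorm_cmult \<alpha>_def using P q by simp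
  then have "feasible A K P W"
    unfolding feasible_iff_L2[OF A] N_def[symmetric] W_def
    using h k0 by (simp add: square_integrable_cmult)
  moreover have "(LINT r:A|lborel. H k0 r * W k0 r) \<noteq> 0"
    unfolding set_integral_mult_eq_L2_inner[OF A] N_def[symmetric] h_def[symmetric]
    using P q by (simp add: W_def \<alpha>_def L2_inner_cmult_left L2_inner_self)
  ultimately show ?thesis
    using k0 sum_rate_pos_iff[OF area sig2] by blast
qed

lemma sum_rate_pos_if_optimal:
  fixes A :: "(real^3) set"
  assumes A: "A \<in> sets lborel" and H: "\<forall>k<K. sq_integrable_on A (H k)"
    and H_nonzero: "\<exists>k<K. \<not> (AE r in lborel. r \<in> A \<longrightarrow> H k r = 0)"
    and area: "\<forall>j<K. area j > 0" and sig2: "\<forall>j<K. sig2 j > 0" and P: "0 < P"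
    and V_opt: "\<forall>W. feasible A K P W \<longrightarrow> sum_rate A K H area sig2 W \<le> sum_rate A K H area sig2 V"
  shows "0 < sum_rate A K H area sig2 V"
proof -
  obtain k0 where k0: "k0 < K" "\<not> (AE r in lborel. r \<in> A \<longrightarrow> H k0 r = 0)"
    using H_nonzero by blast
  then obtain W where "feasible A K P W" "0 < sum_rate A K H area sig2 W"
    using exists_feasible_sum_rate_pos[where H = H, OF A k0(1) H[rule_format, OF k0(1)] k0(2) area sig2 P]
    by blast
  with V_opt show ?thesis
    by (meson order_less_le_trans)
qed

lemma sum_rate_optimal_imp_full_power:
  fixes A :: "(real^3) set"
  assumes A: "A \<in> sets lborel"
    and U: "\<forall>k<K. square_integrable (restrict_space lborel A) (U k)"
    and U_rate: "sum_rate A K H area sig2 U = sum_rate A K H area sig2 V"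
    and V_rate_pos: "0 < sum_rate A K H area sig2 V"
    and V_opt: "\<forall>W. feasible A K P W \<longrightarrow> sum_rate A K H area sig2 W \<le> sum_rate A K H area sig2 V"
    and area: "\<forall>j<K. area j > 0" and sig2: "\<forall>j<K. sig2 j > 0"
  shows "P \<le> (\<Sum>k<K. L2_sqnorm (restrict_space lborel A) (U k))"
proof (rule ccontr)
  define N where "N = restrict_space lborel A"
  define p where "p = (\<Sum>k<K. L2_sqnorm N (U k))"
  assume "\<not> P \<le> (\<Sum>k<K. L2_sqnorm (restrict_space lborel A) (U k))"
  then have "p < P"
    unfolding p_def N_def by simp
  have "0 < sum_rate A K H area sig2 U"
    using U_rate V_rate_pos by simp
  then obtain k where k: "k < K" "(LINT r:A|lborel. H k r * U k r) \<noteq> 0"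
    using sum_rate_pos_iff[OF area sig2] by blast
  then have "L2_sqnorm N (U k) \<noteq> 0"
    using L2_inner_eq_0_if_sqnorm_eq_0 U
    unfolding set_integral_mult_eq_L2_inner[OF A] N_def by blast
  then have "0 < L2_sqnorm N (U k)"
    using L2_sqnorm_nonneg[of N "U k"] by linarith
  also have "\<dots> \<le> p"
    unfolding p_def using k(1) L2_sqnorm_nonneg by (intro member_le_sum) auto
  finally have "0 < p" .
  define c where "c = sqrt (P / p)"
  have "1 < c" "c\<^sup>2 * p = P"
    using \<open>0 < p\<close> \<open>p < P\<close> unfolding c_def by auto
  then have "feasible A K P (\<lambda>j r. complex_of_real c * U j r)"
    unfolding feasible_iff_L2[OF A] N_def[symmetric] using U
    by (simp add: square_integrable_cmult L2_sqnorm_cmult p_def sum_distrib_left N_def)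
  then have "sum_rate A K H area sig2 (\<lambda>j r. complex_of_real c * U j r) \<le> sum_rate A K H area sig2 V"
    using V_opt by blast
  moreover have "sum_rate A K H area sig2 U < sum_rate A K H area sig2 (\<lambda>j r. complex_of_real c * U j r)"
    using \<open>1 < c\<close> U_rate V_rate_pos by (intro sum_rate_less_scaled[OF area sig2]) simp_all
  ultimately show False
    using U_rate by linarith
qed

section \<open>The channel\<close>

text \<open>The channel without its obliquity factor \<open>csqrt (er \<bullet> (s - r) / norm (r - s))\<close>: the
  latter is discontinuous but bounded by 1, while \<open>chan_wave\<close> is continuous away from \<open>s\<close>.\<close>
definition chan_wave :: "real \<Rightarrow> real^3 \<Rightarrow> real^3 \<Rightarrow> complex" where
  "chan_wave lam s r =
     (let k0 = 2 * pi / lam; d = norm (r - s); eta = 120 * pi in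
       (\<i> * complex_of_real (k0 * eta) * exp (- \<i> * complex_of_real (k0 * d))
          / complex_of_real (4 * pi * d))
       * (1 + (\<i> / complex_of_real k0) / complex_of_real d
            - complex_of_real (1 / k0\<^sup>2) / complex_of_real (d\<^sup>2)))"

lemma chan_eq_csqrt_mult_chan_wave:
  "chan er lam s r = csqrt (complex_of_real (er \<bullet> (s - r) / norm (r - s))) * chan_wave lam s r"
  unfolding chan_def chan_wave_def Let_def by (simp add: mult.assoc)

lemma borel_measurable_chan: "chan er lam s \<in> borel_measurable lborel"
  unfolding chan_eq_csqrt_mult_chan_wave[abs_def] chan_wave_def Let_def csqrt_of_real'
  by measurable

lemma continuous_on_chan_wave: "s \<notin> S \<Longrightarrow> continuous_on S (chan_wave lam s)"
  unfolding chan_wave_def Let_def by (intro continuous_intros) auto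

lemma norm_chan_le_norm_chan_wave:
  assumes "norm er = 1" "r \<noteq> s"
  shows "cmod (chan er lam s r) \<le> cmod (chan_wave lam s r)"
proof -
  have "\<bar>er \<bullet> (s - r)\<bar> \<le> norm (r - s)"
    using Cauchy_Schwarz_ineq2[of er "s - r"] assms(1) by (simp add: norm_minus_commute)
  then have "\<bar>er \<bullet> (s - r) / norm (r - s)\<bar> \<le> 1"
    using assms(2) by (simp add: divide_le_eq_1)
  then show ?thesis
    unfolding chan_eq_csqrt_mult_chan_wave norm_mult
    by (intro mult_left_le_one_le) (auto simp: norm_divide)
qed

lemma sq_integrable_on_chan:
  assumes A: "A \<in> sets lborel" "bounded A" and s: "s \<notin> closure A" and er: "norm er = 1"
  shows "sq_integrable_on A (chan er lam s)"
proof -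
  have "compact (chan_wave lam s ` closure A)"
    using assms by (intro compact_continuous_image continuous_on_chan_wave) (auto simp: compact_closure)
  then obtain B where B: "\<forall>y\<in>chan_wave lam s ` closure A. cmod y \<le> B"
    by (meson bounded_iff compact_imp_bounded)
  have bound: "\<forall>r\<in>A. cmod (chan er lam s r) \<le> B"
  proof
    fix r assume "r \<in> A"
    then have "r \<in> closure A" "r \<noteq> s"
      using s closure_subset by auto
    then show "cmod (chan er lam s r) \<le> B"
      using B norm_chan_le_norm_chan_wave[OF er, of r s lam] by force
  qed
  have "finite_measure (restrict_space lborel A)"
    using A emeasure_bounded_finite[of A]
    by (intro finite_measureI) (simp add: emeasure_restrict_space space_restrict_space)
  then show ?thesis
    unfolding sq_integrable_on_iff_square_integrable[OF A(1)]
    using bound by (intro square_integrable_bounded measurable_restrict_space1 borel_measurable_chan)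
      (simp_all add: space_restrict_space)
qed

lemma chan_nonzero:
  assumes "r \<noteq> s" "er \<bullet> (s - r) \<noteq> 0" "lam > 0"
  shows "chan er lam s r \<noteq> 0"
proof -
  define k0 where "k0 = 2 * pi / lam"
  define d where "d = norm (r - s)"
  have "k0 > 0" "d > 0"
    using assms unfolding k0_def d_def by auto
  then have "Im (1 + (\<i> / complex_of_real k0) / complex_of_real d
            - complex_of_real (1 / k0\<^sup>2) / complex_of_real (d\<^sup>2)) \<noteq> 0"
    by (simp add: Im_divide power2_eq_square)
  then have "1 + (\<i> / complex_of_real k0) / complex_of_real d
            - complex_of_real (1 / k0\<^sup>2) / complex_of_real (d\<^sup>2) \<noteq> 0"
    by (metis zero_complex.sel(2))
  with \<open>k0 > 0\<close> \<open>d > 0\<close> assms(2,3) show ?thesis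
    unfolding chan_def Let_def k0_def d_def by simp
qed

lemma chan_not_AE_zero:
  assumes A: "A \<in> sets lborel" "emeasure lborel A > 0"
    and s: "s \<notin> A" and er: "er \<noteq> 0" and lam: "lam > 0"
  shows "\<not> (AE r in lborel. r \<in> A \<longrightarrow> chan er lam s r = 0)"
proof
  assume chan_zero: "AE r in lborel. r \<in> A \<longrightarrow> chan er lam s r = 0"
  have "{r. er \<bullet> r = er \<bullet> s} \<in> null_sets lborel"
    using negligible_hyperplane[of er "er \<bullet> s"] er
    by (simp add: negligible_iff_null_sets null_sets_completion_iff closed_hyperplane)
  then have "AE r in lborel. er \<bullet> (s - r) \<noteq> 0"
    by (auto dest: AE_not_in simp: inner_diff_right)
  with chan_zero have "AE r in lborel. r \<notin> A"
    by eventually_elim (metis s chan_nonzero[OF _ _ lam])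
  then have "A \<in> null_sets lborel"
    using AE_iff_null_sets A(1) by blast
  with A(2) show False by auto
qed

theorem sum_rate_optimal_in_channel_span:
  fixes A :: "(real^3) set" and H V :: "nat \<Rightarrow> real^3 \<Rightarrow> complex"
  assumes A: "A \<in> sets lborel"
    and H: "\<forall>k<K. sq_integrable_on A (H k)"
    and H_nonzero: "\<exists>k<K. \<not> (AE r in lborel. r \<in> A \<longrightarrow> H k r = 0)"
    and area: "\<forall>k<K. area k > 0" and sig2: "\<forall>k<K. sig2 k > 0" and P: "P > 0"
    and V_feas: "feasible A K P V"
    and V_opt: "\<forall>W. feasible A K P W \<longrightarrow> sum_rate A K H area sig2 W \<le> sum_rate A K H area sig2 V"
  shows "\<exists>b. \<forall>k<K. AE r in lborel. r \<in> A \<longrightarrow> V k r = (\<Sum>j<K. b j k * cnj (H j r))"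
proof -
  define N where "N = restrict_space lborel A"
  define h where "h k = (\<lambda>r. cnj (H k r))" for k
  have h: "\<forall>k<K. square_integrable N (h k)"
    using H unfolding h_def N_def sq_integrable_on_iff_square_integrable[OF A]
    by (auto intro: square_integrable_cnj)
  have V: "\<forall>k<K. square_integrable N (V k)" and V_power: "(\<Sum>k<K. L2_sqnorm N (V k)) = P"
    using V_feas unfolding feasible_iff_L2[OF A] N_def by auto
  obtain B where gains: "\<And>k i. k < K \<Longrightarrow> i < K \<Longrightarrow>
      L2_inner N (\<lambda>x. \<Sum>j<K. B k j * h j x) (h i) = L2_inner N (V k) (h i)"
    and power: "\<And>k. k < K \<Longrightarrow> L2_sqnorm N (V k)
      = L2_sqnorm N (\<lambda>x. \<Sum>j<K. B k j * h j x) + L2_sqnorm N (\<lambda>x. V k x - (\<Sum>j<K. B k j * h j x))"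
    using exists_orthogonal_projection_family[OF h V] by blast
  define U where "U k x = (\<Sum>j<K. B k j * h j x)" for k x
  define R where "R k x = V k x - U k x" for k x
  have U: "\<forall>k<K. square_integrable N (U k)"
    unfolding U_def using h by (auto intro!: square_integrable_sum square_integrable_cmult)
  have rate_eq: "sum_rate A K H area sig2 U = sum_rate A K H area sig2 V"
    using gains unfolding U_def
    by (intro sum_rate_cong_gains) (simp add: set_integral_mult_eq_L2_inner[OF A] flip: N_def h_def)
  have "P \<le> (\<Sum>k<K. L2_sqnorm N (U k))"
    unfolding N_def using sum_rate_pos_if_optimal[OF A H H_nonzero area sig2 P V_opt]
    by (rule sum_rate_optimal_imp_full_power[OF A U[unfolded N_def] rate_eq _ V_opt area sig2])
  moreover have "(\<Sum>k<K. L2_sqnorm N (V k)) = (\<Sum>k<K. L2_sqnorm N (U k)) + (\<Sum>k<K. L2_sqnorm N (R k))"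
    unfolding U_def R_def sum.distrib[symmetric] using power by (intro sum.cong) auto
  moreover have "0 \<le> (\<Sum>k<K. L2_sqnorm N (R k))"
    by (intro sum_nonneg L2_sqnorm_nonneg)
  ultimately have "(\<Sum>k<K. L2_sqnorm N (R k)) = 0"
    using V_power by linarith
  then have R_zero: "\<forall>k<K. L2_sqnorm N (R k) = 0"
    by (subst (asm) sum_nonneg_eq_0_iff) (auto intro: L2_sqnorm_nonneg)
  have "AE r in lborel. r \<in> A \<longrightarrow> V k r = U k r" if "k < K" for k
  proof -
    have "square_integrable N (R k)"
      unfolding R_def using V U that by (intro square_integrable_diff) auto
    then have "AE r in N. R k r = 0"
      using L2_sqnorm_eq_0_iff R_zero that by blast
    then show ?thesis
      unfolding N_def AE_restrict_space_lborel_iff[OF A] R_def by simp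
  qed
  then show ?thesis
    by (intro exI[of _ "\<lambda>j k. B k j"]) (simp add: U_def h_def)
qed

theorem proposition1:
  fixes A :: "(real^3) set" and K :: nat and s :: "nat \<Rightarrow> real^3"
    and area sig2 :: "nat \<Rightarrow> real" and P lam :: real and er :: "real^3"
    and V :: "nat \<Rightarrow> real^3 \<Rightarrow> complex"
  assumes A_meas: "A \<in> sets lborel" and A_pos: "emeasure lborel A > 0"
    and A_bdd: "bounded A"
    and er_unit: "norm er = 1" and lam_pos: "lam > 0"
    and K_pos: "K \<ge> 1"
    and s_out: "\<forall>k<K. s k \<notin> closure A"
    and area_pos: "\<forall>k<K. area k > 0" and sig2_pos: "\<forall>k<K. sig2 k > 0"
    and P_pos: "P > 0"
    and V_feas: "feasible A K P V"
    and V_opt: "\<forall>W. feasible A K P W \<longrightarrow>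
                  sum_rate A K (\<lambda>k. chan er lam (s k)) area sig2 W
                  \<le> sum_rate A K (\<lambda>k. chan er lam (s k)) area sig2 V"
  shows "\<exists>b :: nat \<Rightarrow> nat \<Rightarrow> complex. \<forall>k<K. AE r in lborel. r \<in> A \<longrightarrow>
           V k r = (\<Sum>j<K. b j k * cnj (chan er lam (s j) r))"
proof (rule sum_rate_optimal_in_channel_span[OF A_meas _ _ area_pos sig2_pos P_pos V_feas V_opt])
  show "\<forall>k<K. sq_integrable_on A (chan er lam (s k))"
    using s_out sq_integrable_on_chan[OF A_meas A_bdd _ er_unit] by blast
  have "s 0 \<notin> A" "er \<noteq> 0"
    using K_pos s_out closure_subset er_unit by auto
  then show "\<exists>k<K. \<not> (AE r in lborel. r \<in> A \<longrightarrow> chan er lam (s k) r = 0)"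
    using K_pos chan_not_AE_zero[OF A_meas A_pos _ _ lam_pos] by (intro exI[of _ 0]) auto
qed

end
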